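(* Consider the discrete-time system $x_{t+1} = A x_t + B u_t + E w_t + K$ with $x_t \in \mathbb{R}^{n_x}$, $u_t \in U \subseteq \mathbb{R}^{n_u}$, $w_t \in W \subseteq \mathbb{R}^{n_w}$, where $A \in \mathbb{R}^{n_x \times n_x}$ is invertible, $B \in \mathbb{R}^{n_x \times n_u}$, $E \in \mathbb{R}^{n_x \times n_w}$, $K \in \mathbb{R}^{n_x}$, $U$ is a zonotope, and $W$ is a polytope with vertex set $V = \{w_1,\dots,w_M\}$. Let $Z_0 \subseteq \mathbb{R}^{n_x}$ be a zonotope and define the backward reachable sets $X_0 = Z_0$ and, for $k \geq 0$, $$X_{k+1} = \{x \in \mathbb{R}^{n_x} \mid \exists u \in U\ \forall w \in W: Ax + Bu + Ew + K \in X_k\}.$$ Let $H, h$ satisfy $EW = \{x \mid Hx \leq h\}$, and fix constants $b_i > 0$, $d_i \geq 0$. For a zonotope $Z = ([g_1, \dots, g_N], c)$ define $\overline{\mathfrak{Z}}(Z, EW) = ([\overline{\alpha}_1 g_1, \dots, \overline{\alpha}_N g_N], \overline{c})$ where $(\theta, \overline{\alpha}, \overline{c})$ is a minimizer of $\min \sum_i b_i \alpha_i$ subject to $c' + \sum_i \theta_{ij} g_i = E w_j$ for all $j$ and $|\theta_{ij}| \leq \alpha_i \leq 1$, and define $\underline{\mathfrak{Z}}(Z, EW) = ([\underline{\alpha}_1 g_1, \dots, \underline{\alpha}_N g_N], \underline{c})$ where $(\underline{\alpha}, \underline{c})$ is a maximizer of $\max \sum_i d_i \log \alpha_i$ subject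 to $Hc' + |HG|\alpha \leq h$, $0 \leq \alpha \leq 1$ (with $G = [g_1,\dots,g_N]$). Define recursively $\underline{Z}_0 = \overline{Z}_0 = Z_0$ and $$\underline{Z}_{k+1} = A^{-1}\big(((\underline{Z}_k \ominus \overline{\mathfrak{Z}}(\underline{Z}_k, EW)) \oplus (-BU)) + (-K)\big),$$ $$\overline{Z}_{k+1} = A^{-1}\big(((\overline{Z}_k \ominus \underline{\mathfrak{Z}}(\overline{Z}_k, EW)) \oplus (-BU)) + (-K)\big),$$ assuming all the optimization problems involved have optimal solutions (so that these sequences are defined). Then $\underline{Z}_k \subseteq X_k \subseteq \overline{Z}_k$ for all $k \geq 0$.
   Context: A zonotope with generator-representation $(G, c)$, where $G = [g_1, \dots, g_N]$ and $c \in \mathbb{R}^n$, is the set $\{c + \sum_{i=1}^N \theta_i g_i \mid \theta_i \in [-1,1]\}$, denoted $(G,c)$. For a matrix $M$ and set $S$, $MS = \{Ms \mid s \in S\}$. Minkowski sum $X \oplus Y = \{x+y \mid x\in X, y\in Y\}$, $x + Y = \{x\}\oplus Y$, Minkowski difference $X \ominus Y = \{z \mid z + Y \subseteq X\}$. $|HG|$ denotes entrywise absolute value; vector inequalities are entrywise. *)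

theory Defs
  imports "HOL-Analysis.Analysis"
begin

definition zono :: "(real^'n) list \<Rightarrow> real^'n \<Rightarrow> (real^'n) set" where
  "zono G c = {c + (\<Sum>i<length G. \<theta> i *\<^sub>R G ! i) | \<theta>. \<forall>i<length G. \<bar>\<theta> i\<bar> \<le> 1}"

definition msum :: "('a::plus) set \<Rightarrow> 'a set \<Rightarrow> 'a set" where
  "msum X Y = {x + y | x y. x \<in> X \<and> y \<in> Y}"

definition mdiff :: "('a::plus) set \<Rightarrow> 'a set \<Rightarrow> 'a set" where
  "mdiff X Y = {z. (\<lambda>y. z + y) ` Y \<subseteq> X}"

definition scale_gens :: "(nat \<Rightarrow> real) \<Rightarrow> (real^'n) list \<Rightarrow> (real^'n) list" where
  "scale_gens \<alpha> G = map (\<lambda>i. \<alpha> i *\<^sub>R G ! i) [0..<length G]"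

primrec brs :: "real^'x^'x \<Rightarrow> real^'u^'x \<Rightarrow> real^'w^'x \<Rightarrow> real^'x \<Rightarrow>
    (real^'u) set \<Rightarrow> (real^'w) set \<Rightarrow> (real^'x) set \<Rightarrow> nat \<Rightarrow> (real^'x) set" where
  "brs A B E K U W Z0 0 = Z0"
| "brs A B E K U W Z0 (Suc k) =
     {x. \<exists>u\<in>U. \<forall>w\<in>W. A *v x + B *v u + E *v w + K \<in> brs A B E K U W Z0 k}"

text \<open>Feasibility of (theta, alpha, c') in the LP defining the outer zonotope
  overline-frak-Z(Z, EW); vertices are indexed by the elements of V.\<close>
definition outer_feasible :: "real^'w^'x \<Rightarrow> (real^'w) set \<Rightarrow> (real^'x) list \<Rightarrow>
    (nat \<Rightarrow> real^'w \<Rightarrow> real) \<Rightarrow> (nat \<Rightarrow> real) \<Rightarrow> real^'x \<Rightarrow> bool" where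
  "outer_feasible E V G \<theta> \<alpha> c' \<longleftrightarrow>
     (\<forall>v\<in>V. c' + (\<Sum>i<length G. \<theta> i v *\<^sub>R G ! i) = E *v v) \<and>
     (\<forall>i<length G. \<forall>v\<in>V. \<bar>\<theta> i v\<bar> \<le> \<alpha> i) \<and>
     (\<forall>i<length G. \<alpha> i \<le> 1)"

definition outer_minimizer :: "(nat \<Rightarrow> real) \<Rightarrow> real^'w^'x \<Rightarrow> (real^'w) set \<Rightarrow> (real^'x) list \<Rightarrow>
    (nat \<Rightarrow> real^'w \<Rightarrow> real) \<Rightarrow> (nat \<Rightarrow> real) \<Rightarrow> real^'x \<Rightarrow> bool" where
  "outer_minimizer b E V G \<theta> \<alpha> c' \<longleftrightarrow>
     outer_feasible E V G \<theta> \<alpha> c' \<and>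
     (\<forall>\<theta>' \<alpha>' c''. outer_feasible E V G \<theta>' \<alpha>' c'' \<longrightarrow>
        (\<Sum>i<length G. b i * \<alpha> i) \<le> (\<Sum>i<length G. b i * \<alpha>' i))"

definition inner_feasible :: "real^'x^'m \<Rightarrow> real^'m \<Rightarrow> (real^'x) list \<Rightarrow>
    (nat \<Rightarrow> real) \<Rightarrow> real^'x \<Rightarrow> bool" where
  "inner_feasible H h G \<alpha> c' \<longleftrightarrow>
     (\<forall>r. (H *v c') $ r + (\<Sum>i<length G. \<bar>(H *v (G ! i)) $ r\<bar> * \<alpha> i) \<le> h $ r) \<and>
     (\<forall>i<length G. 0 \<le> \<alpha> i \<and> \<alpha> i \<le> 1)"

text \<open>Objective sum_i d_i log alpha_i, valued in the extended reals with
  log 0 = -infinity and the convention 0 * log 0 = 0.\<close>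
definition log_obj :: "(nat \<Rightarrow> real) \<Rightarrow> nat \<Rightarrow> (nat \<Rightarrow> real) \<Rightarrow> ereal" where
  "log_obj d N \<alpha> = (\<Sum>i<N. if d i = 0 then 0
                            else if \<alpha> i \<le> 0 then -\<infinity> else ereal (d i * ln (\<alpha> i)))"

definition inner_maximizer :: "(nat \<Rightarrow> real) \<Rightarrow> real^'x^'m \<Rightarrow> real^'m \<Rightarrow> (real^'x) list \<Rightarrow>
    (nat \<Rightarrow> real) \<Rightarrow> real^'x \<Rightarrow> bool" where
  "inner_maximizer d H h G \<alpha> c' \<longleftrightarrow>
     inner_feasible H h G \<alpha> c' \<and>
     (\<forall>\<alpha>' c''. inner_feasible H h G \<alpha>' c'' \<longrightarrow>
        log_obj d (length G) \<alpha>' \<le> log_obj d (length G) \<alpha>)"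

end

theory Submission imports Defs begin

text \<open>Write \<open>Pre(X, D) = A\<^sup>-\<^sup>1(((X \<ominus> D) \<oplus> (-BU)) + (-K))\<close>. For invertible \<open>A\<close> the
  backward reachable sets satisfy \<open>X\<^sub>k\<^sub>+\<^sub>1 = Pre(X\<^sub>k, EW)\<close>, and both zonotope recursions
  have the form \<open>Z\<^sub>k\<^sub>+\<^sub>1 = Pre(Z\<^sub>k, D\<^sub>k)\<close>. Since \<open>Pre\<close> is monotone in \<open>X\<close> and antitone in \<open>D\<close>,
  induction on \<open>k\<close> reduces the claim to \<open>EW \<subseteq> D\<^sub>k\<close> for the outer and \<open>D\<^sub>k \<subseteq> EW\<close> for the
  inner zonotopes.\<close>

lemma zono_iff:
  "x \<in> zono G c \<longleftrightarrow> (\<exists>\<theta>. (\<forall>i<length G. \<bar>\<theta> i\<bar> \<le> 1) \<and> x = c + (\<Sum>i<length G. \<theta> i *\<^sub>R G ! i))"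
  unfolding zono_def by auto

lemma length_scale_gens [simp]: "length (scale_gens \<alpha> G) = length G"
  by (simp add: scale_gens_def)

lemma nth_scale_gens [simp]: "i < length G \<Longrightarrow> scale_gens \<alpha> G ! i = \<alpha> i *\<^sub>R G ! i"
  by (simp add: scale_gens_def)

lemma convex_zono: "convex (zono G c)"
proof (rule convexI)
  fix x y and u v :: real
  assume x: "x \<in> zono G c" and y: "y \<in> zono G c"
    and u: "0 \<le> u" and v: "0 \<le> v" and uv: "u + v = 1"
  obtain s where s: "\<forall>i<length G. \<bar>s i\<bar> \<le> 1" "x = c + (\<Sum>i<length G. s i *\<^sub>R G ! i)"
    using x unfolding zono_iff by blast
  obtain t where t: "\<forall>i<length G. \<bar>t i\<bar> \<le> 1" "y = c + (\<Sum>i<length G. t i *\<^sub>R G ! i)"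
    using y unfolding zono_iff by blast
  define r where "r i = u * s i + v * t i" for i
  have r_bound: "\<forall>i<length G. \<bar>r i\<bar> \<le> 1"
  proof (intro allI impI)
    fix i assume "i < length G"
    have "\<bar>r i\<bar> \<le> u * \<bar>s i\<bar> + v * \<bar>t i\<bar>"
      unfolding r_def using u v by (metis abs_mult abs_of_nonneg abs_triangle_ineq)
    also have "\<dots> \<le> u * 1 + v * 1"
      using s t \<open>i < length G\<close> u v by (intro add_mono mult_left_mono) auto
    finally show "\<bar>r i\<bar> \<le> 1" using uv by simp
  qed
  have "u *\<^sub>R x + v *\<^sub>R y = (u + v) *\<^sub>R c +
      ((\<Sum>i<length G. (u * s i) *\<^sub>R G ! i) + (\<Sum>i<length G. (v * t i) *\<^sub>R G ! i))"
    unfolding s(2) t(2) by (simp add: scaleR_add_right scaleR_sum_right scaleR_add_left algebra_simps)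
  also have "\<dots> = c + (\<Sum>i<length G. r i *\<^sub>R G ! i)"
    using uv by (simp add: r_def scaleR_add_left sum.distrib)
  finally show "u *\<^sub>R x + v *\<^sub>R y \<in> zono G c"
    unfolding zono_iff using r_bound by blast
qed

lemma outer_feasible_vertex_in_zono:
  assumes "outer_feasible E V G \<theta> \<alpha> c'" and "v \<in> V"
  shows "E *v v \<in> zono (scale_gens \<alpha> G) c'"
proof -
  have bound: "\<bar>\<theta> i v\<bar> \<le> \<alpha> i" if "i < length G" for i
    using assms that unfolding outer_feasible_def by blast
  \<comment> \<open>\<open>\<alpha> i = 0\<close> forces \<open>\<theta> i v = 0\<close>, so the coefficient may then be chosen freely.\<close>
  define t where "t i = (if \<alpha> i = 0 then 0 else \<theta> i v / \<alpha> i)" for i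
  have t_bound: "\<bar>t i\<bar> \<le> 1" if "i < length G" for i
    using bound[OF that] unfolding t_def by (auto simp: abs_divide divide_le_eq)
  have "\<theta> i v *\<^sub>R G ! i = t i *\<^sub>R scale_gens \<alpha> G ! i" if "i < length G" for i
    using bound[OF that] that unfolding t_def by auto
  then have "E *v v = c' + (\<Sum>i<length G. t i *\<^sub>R scale_gens \<alpha> G ! i)"
    using assms unfolding outer_feasible_def by (metis (no_types, lifting) lessThan_iff sum.cong)
  with t_bound show ?thesis
    unfolding zono_iff by auto
qed

lemma outer_feasible_image_subset_zono:
  assumes "outer_feasible E V G \<theta> \<alpha> c'"
  shows "(\<lambda>w. E *v w) ` (convex hull V) \<subseteq> zono (scale_gens \<alpha> G) c'"
proof -
  have "(\<lambda>w. E *v w) ` (convex hull V) = convex hull ((\<lambda>w. E *v w) ` V)"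
    by (rule convex_hull_linear_image) simp
  also have "\<dots> \<subseteq> zono (scale_gens \<alpha> G) c'"
    using outer_feasible_vertex_in_zono[OF assms] convex_zono by (intro hull_minimal) auto
  finally show ?thesis .
qed

lemma inner_feasible_zono_subset:
  fixes H :: "real^'x^'m"
  assumes feas: "inner_feasible H h G \<alpha> c'"
  shows "zono (scale_gens \<alpha> G) c' \<subseteq> {x. \<forall>r. (H *v x) $ r \<le> h $ r}"
proof clarify
  fix y r assume "y \<in> zono (scale_gens \<alpha> G) c'"
  then obtain t where t: "\<forall>i<length G. \<bar>t i\<bar> \<le> 1"
    and y: "y = c' + (\<Sum>i<length G. t i *\<^sub>R (\<alpha> i *\<^sub>R G ! i))"
    unfolding zono_iff by auto
  have \<alpha>: "\<forall>i<length G. 0 \<le> \<alpha> i \<and> \<alpha> i \<le> 1"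
    using feas unfolding inner_feasible_def by blast
  have "(H *v y) $ r = (H *v c') $ r + (\<Sum>i<length G. (t i * \<alpha> i) * (H *v (G ! i)) $ r)"
    unfolding y
    by (simp add: matrix_vector_right_distrib matrix_vector_mult_scaleR
        linear_sum[OF matrix_vector_mul_linear])
  also have "\<dots> \<le> (H *v c') $ r + (\<Sum>i<length G. \<bar>(H *v (G ! i)) $ r\<bar> * \<alpha> i)"
  proof (intro add_left_mono sum_mono)
    fix i assume "i \<in> {..<length G}"
    then have "\<bar>t i\<bar> \<le> 1" "0 \<le> \<alpha> i" using t \<alpha> by auto
    then have "\<bar>t i * \<alpha> i\<bar> \<le> \<alpha> i"
      by (simp add: abs_mult mult_left_le_one_le)
    have "(t i * \<alpha> i) * (H *v (G ! i)) $ r \<le> \<bar>t i * \<alpha> i\<bar> * \<bar>(H *v (G ! i)) $ r\<bar>"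
      by (metis abs_ge_self abs_mult)
    also have "\<dots> \<le> \<alpha> i * \<bar>(H *v (G ! i)) $ r\<bar>"
      using \<open>\<bar>t i * \<alpha> i\<bar> \<le> \<alpha> i\<close> by (rule mult_right_mono) simp
    finally show "(t i * \<alpha> i) * (H *v (G ! i)) $ r \<le> \<bar>(H *v (G ! i)) $ r\<bar> * \<alpha> i"
      by (simp add: mult.commute)
  qed
  also have "\<dots> \<le> h $ r"
    using feas unfolding inner_feasible_def by blast
  finally show "(H *v y) $ r \<le> h $ r" .
qed

lemma mdiff_iff: "z \<in> mdiff X D \<longleftrightarrow> (\<forall>y\<in>D. z + y \<in> X)"
  unfolding mdiff_def by auto

lemma mdiff_mono: "X \<subseteq> X' \<Longrightarrow> D' \<subseteq> D \<Longrightarrow> mdiff X D \<subseteq> mdiff X' D'"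
  unfolding mdiff_def by blast

lemma msum_mono: "X \<subseteq> X' \<Longrightarrow> Y \<subseteq> Y' \<Longrightarrow> msum X Y \<subseteq> msum X' Y'"
  unfolding msum_def by blast

definition backward_step ::
    "real^'x^'x \<Rightarrow> real^'u^'x \<Rightarrow> real^'x \<Rightarrow> (real^'u) set \<Rightarrow> (real^'x) set \<Rightarrow> (real^'x) set \<Rightarrow>
      (real^'x) set" where
  "backward_step A B K U X D =
     (\<lambda>y. matrix_inv A *v y) ` ((\<lambda>y. y + (- K)) ` msum (mdiff X D) (uminus ` (\<lambda>u. B *v u) ` U))"

lemma backward_step_mono:
  "X \<subseteq> X' \<Longrightarrow> D' \<subseteq> D \<Longrightarrow> backward_step A B K U X D \<subseteq> backward_step A B K U X' D'"
  unfolding backward_step_def by (intro image_mono msum_mono mdiff_mono order.refl)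

lemma matrix_inv_mult_vector:
  assumes "invertible A"
  shows "A *v (matrix_inv A *v y) = y" and "matrix_inv A *v (A *v y) = y"
proof -
  have "A ** matrix_inv A = mat 1" "matrix_inv A ** A = mat 1"
    using assms unfolding invertible_def matrix_inv_def by (metis (mono_tags, lifting) someI_ex)+
  then show "A *v (matrix_inv A *v y) = y" "matrix_inv A *v (A *v y) = y"
    by (simp_all add: matrix_vector_mul_assoc)
qed

lemma mem_backward_step_iff:
  assumes "invertible A"
  shows "x \<in> backward_step A B K U X D \<longleftrightarrow> (\<exists>u\<in>U. A *v x + B *v u + K \<in> mdiff X D)"
proof
  assume "x \<in> backward_step A B K U X D"
  then obtain z u where z: "z \<in> mdiff X D" and u: "u \<in> U"
    and x: "x = matrix_inv A *v (z + - (B *v u) + - K)"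
    unfolding backward_step_def msum_def by auto
  have "A *v x + B *v u + K = z"
    unfolding x using matrix_inv_mult_vector(1)[OF assms] by simp
  with z u show "\<exists>u\<in>U. A *v x + B *v u + K \<in> mdiff X D"
    by metis
next
  assume "\<exists>u\<in>U. A *v x + B *v u + K \<in> mdiff X D"
  then obtain u where "u \<in> U" "A *v x + B *v u + K \<in> mdiff X D" ..
  moreover have "x = matrix_inv A *v ((A *v x + B *v u + K) + - (B *v u) + - K)"
    using matrix_inv_mult_vector[OF assms] by simp
  ultimately show "x \<in> backward_step A B K U X D"
    unfolding backward_step_def msum_def by blast
qed

lemma brs_Suc_eq_backward_step:
  assumes "invertible A"
  shows "brs A B E K U W Z0 (Suc k) = backward_step A B K U (brs A B E K U W Z0 k) ((\<lambda>w. E *v w) ` W)"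
  unfolding set_eq_iff mem_backward_step_iff[OF assms] mdiff_iff by (simp add: add_ac)

theorem proposition5:
  fixes A :: "real^'x^'x" and B :: "real^'u^'x" and E :: "real^'w^'x" and K :: "real^'x"
    and GU :: "(real^'u) list" and cU :: "real^'u"
    and W V :: "(real^'w) set"
    and G0 :: "(real^'x) list" and c0 :: "real^'x"
    and H :: "real^'x^'m" and h :: "real^'m"
    and b d :: "nat \<Rightarrow> real"
    and Gl Gu :: "nat \<Rightarrow> (real^'x) list" and cl cu :: "nat \<Rightarrow> real^'x"
    and \<theta>l :: "nat \<Rightarrow> nat \<Rightarrow> real^'w \<Rightarrow> real" and \<alpha>l :: "nat \<Rightarrow> nat \<Rightarrow> real" and cbl :: "nat \<Rightarrow> real^'x"
    and \<alpha>u :: "nat \<Rightarrow> nat \<Rightarrow> real" and cbu :: "nat \<Rightarrow> real^'x"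
  assumes A_inv: "invertible A"
    and U_def: "U = zono GU cU"
    and W_poly: "finite V" "W = convex hull V" "V = {v. v extreme_point_of W}"
    and EW_H: "(\<lambda>w. E *v w) ` W = {x. \<forall>r. (H *v x) $ r \<le> h $ r}"
    and b_pos: "\<forall>i. b i > 0" and d_nonneg: "\<forall>i. d i \<ge> 0"
    and init_l: "Gl 0 = G0" "cl 0 = c0"
    and init_u: "Gu 0 = G0" "cu 0 = c0"
    and opt_l: "\<forall>k. outer_minimizer b E V (Gl k) (\<theta>l k) (\<alpha>l k) (cbl k)"
    and opt_u: "\<forall>k. inner_maximizer d H h (Gu k) (\<alpha>u k) (cbu k)"
    and step_l: "\<forall>k. zono (Gl (Suc k)) (cl (Suc k)) =
        (\<lambda>y. matrix_inv A *v y) `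
          ((\<lambda>y. y + (- K)) `
            msum (mdiff (zono (Gl k) (cl k)) (zono (scale_gens (\<alpha>l k) (Gl k)) (cbl k)))
                 (uminus ` (\<lambda>u. B *v u) ` U))"
    and step_u: "\<forall>k. zono (Gu (Suc k)) (cu (Suc k)) =
        (\<lambda>y. matrix_inv A *v y) `
          ((\<lambda>y. y + (- K)) `
            msum (mdiff (zono (Gu k) (cu k)) (zono (scale_gens (\<alpha>u k) (Gu k)) (cbu k)))
                 (uminus ` (\<lambda>u. B *v u) ` U))"
  shows "\<forall>k. zono (Gl k) (cl k) \<subseteq> brs A B E K U W (zono G0 c0) k \<and>
             brs A B E K U W (zono G0 c0) k \<subseteq> zono (Gu k) (cu k)"
proof
  let ?X = "brs A B E K U W (zono G0 c0)" and ?EW = "(\<lambda>w. E *v w) ` W"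
  have outer: "?EW \<subseteq> zono (scale_gens (\<alpha>l k) (Gl k)) (cbl k)" for k
    using outer_feasible_image_subset_zono[of E V "Gl k" "\<theta>l k" "\<alpha>l k" "cbl k"] opt_l W_poly(2)
    unfolding outer_minimizer_def by blast
  have inner: "zono (scale_gens (\<alpha>u k) (Gu k)) (cbu k) \<subseteq> ?EW" for k
    using inner_feasible_zono_subset[of H h "Gu k" "\<alpha>u k" "cbu k"] opt_u EW_H
    unfolding inner_maximizer_def by blast
  fix k show "zono (Gl k) (cl k) \<subseteq> ?X k \<and> ?X k \<subseteq> zono (Gu k) (cu k)"
  proof (induction k)
    case 0
    then show ?case using init_l init_u by simp
  next
    case (Suc k)
    have "zono (Gl (Suc k)) (cl (Suc k)) \<subseteq> backward_step A B K U (?X k) ?EW"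
      unfolding step_l[rule_format] backward_step_def[symmetric]
      using Suc.IH outer[of k] by (intro backward_step_mono) auto
    moreover have "backward_step A B K U (?X k) ?EW \<subseteq> zono (Gu (Suc k)) (cu (Suc k))"
      unfolding step_u[rule_format] backward_step_def[symmetric]
      using Suc.IH inner[of k] by (intro backward_step_mono) auto
    ultimately show ?case
      unfolding brs_Suc_eq_backward_step[OF A_inv] ..
  qed
qed

end
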